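(* Let $K$ be a field of characteristic $p>0$, let $a\in K^{{\mathbb N}}$ be a simple nondegenerate $K$-recurrence sequence, let $q$ be a power of $p$, and let $r,s\in{\mathbb Q}$. If $\{r+sq^n\mid n\ge m\}\subseteq{\mathcal Z}(a)$ for some $m\in{\mathbb N}$, then $\{r+sq^n\mid n\in{\mathbb N}\}\cap{\mathbb N}\subseteq{\mathcal Z}(a)$.
   Context: ${\mathbb N}=\{0,1,2,\dots\}$, ${\mathcal Z}(a)=\{n\in{\mathbb N}\mid a(n)=0\}$. The minimum polynomial $P_a$ is the monic generator of $\{P\in K[E]\mid P(E)a=0\}$, $(Ea)(n)=a(n+1)$. $a$ is simple if $P_a$ has distinct roots and nondegenerate if its roots are nonzero and no quotient of two distinct roots is a root of unity. *)

theory Defs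
  imports "HOL-Algebra.Algebraic_Closure_Type"
begin

definition zero_set :: "(nat \<Rightarrow> 'a::zero) \<Rightarrow> nat set" where
  "zero_set a = {n. a n = 0}"

text \<open>Application of the polynomial P(E) in the shift operator (E a)(n) = a(n+1).\<close>
definition shift_apply :: "'a::comm_ring_1 poly \<Rightarrow> (nat \<Rightarrow> 'a) \<Rightarrow> nat \<Rightarrow> 'a" where
  "shift_apply P a = (\<lambda>n. \<Sum>i\<le>degree P. coeff P i * a (n + i))"

definition annihilates :: "'a::comm_ring_1 poly \<Rightarrow> (nat \<Rightarrow> 'a) \<Rightarrow> bool" where
  "annihilates P a \<longleftrightarrow> shift_apply P a = (\<lambda>_. 0)"

definition is_recurrence :: "(nat \<Rightarrow> 'a::field) \<Rightarrow> bool" where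
  "is_recurrence a \<longleftrightarrow> (\<exists>P. P \<noteq> 0 \<and> annihilates P a)"

definition min_poly :: "(nat \<Rightarrow> 'a::field) \<Rightarrow> 'a poly" where
  "min_poly a = (THE P. lead_coeff P = 1 \<and> (\<forall>Q. annihilates Q a \<longleftrightarrow> P dvd Q))"

definition simple_rec :: "(nat \<Rightarrow> 'a::field) \<Rightarrow> bool" where
  "simple_rec a \<longleftrightarrow> rsquarefree (map_poly to_ac (min_poly a))"

definition nondegenerate_rec :: "(nat \<Rightarrow> 'a::field) \<Rightarrow> bool" where
  "nondegenerate_rec a \<longleftrightarrow>
     (\<forall>x. poly (map_poly to_ac (min_poly a)) x = 0 \<longrightarrow> x \<noteq> 0) \<and>
     (\<forall>x y. poly (map_poly to_ac (min_poly a)) x = 0 \<longrightarrow>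
            poly (map_poly to_ac (min_poly a)) y = 0 \<longrightarrow> x \<noteq> y \<longrightarrow>
            \<not> (\<exists>k::nat. k > 0 \<and> (x / y) ^ k = 1))"

end

theory Submission
  imports Defs
begin

(* Over the algebraic closure a simple recurrence is an exponential polynomial
   a(n) = \<Sum> c\<^sub>\<alpha> \<alpha>^n over the distinct, nonzero roots \<alpha> of P_a.  Let
   e\<^sub>i = 1 + q + ... + q^(i-1) be the base-q repunit, so e\<^sub>(i+1) = 1 + q e\<^sub>i.  As x \<mapsto> x^q
   is additive, vanishing of \<Sum> h(\<alpha>) \<beta>(\<alpha>)^(e\<^sub>i) for all i \<ge> 1 forces \<Sum> h(\<alpha>) = 0
   (induction on the number of roots); hence a(M + T e\<^sub>i) = 0 for all i \<ge> 1 implies a(M) = 0.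
   The numbers n\<^sub>j = r + s q^j satisfy n\<^sub>(j+i) = n\<^sub>j + (n\<^sub>(j+1) - n\<^sub>j) e\<^sub>i, and once one
   of them is a natural number so are all later ones; a downward induction from m then
   reaches every natural n\<^sub>j. *)

definition repunit :: "nat \<Rightarrow> nat \<Rightarrow> nat" where
  "repunit q i = (\<Sum>l<i. q ^ l)"

lemma repunit_0 [simp]: "repunit q 0 = 0"
  by (simp add: repunit_def)

lemma repunit_Suc: "repunit q (Suc i) = 1 + q * repunit q i"
  by (simp add: repunit_def sum.lessThan_Suc_shift sum_distrib_left del: sum.lessThan_Suc)

lemma of_nat_repunit_mult:
  "(of_nat (repunit q i) :: 'a::comm_ring_1) * (of_nat q - 1) = of_nat q ^ i - 1"
  by (simp add: repunit_def power_diff_1_eq mult.commute)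

subsection \<open>The shift operator\<close>

lemma shift_apply_eq_sum_lessThan:
  fixes P :: "'a::comm_ring_1 poly"
  assumes "degree P < D"
  shows "shift_apply P a n = (\<Sum>i<D. coeff P i * a (n + i))"
  unfolding shift_apply_def
  by (rule sum.mono_neutral_left) (use assms in \<open>auto simp: coeff_eq_0\<close>)

lemma shift_apply_0 [simp]: "shift_apply (0::'a::comm_ring_1 poly) a n = 0"
  by (simp add: shift_apply_def)

lemma shift_apply_add:
  fixes P Q :: "'a::comm_ring_1 poly"
  shows "shift_apply (P + Q) a n = shift_apply P a n + shift_apply Q a n"
proof -
  let ?D = "Suc (degree P + degree Q)"
  have "degree (P + Q) < ?D" using degree_add_le_max[of P Q] by linarith
  then show ?thesis
    by (simp add: shift_apply_eq_sum_lessThan[of _ ?D] sum.distrib algebra_simps del: sum.lessThan_Suc)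
qed

lemma shift_apply_diff:
  fixes P Q :: "'a::comm_ring_1 poly"
  shows "shift_apply (P - Q) a n = shift_apply P a n - shift_apply Q a n"
  using shift_apply_add[of "P - Q" Q a n] by simp

lemma shift_apply_smult:
  fixes P :: "'a::comm_ring_1 poly"
  shows "shift_apply (smult c P) a n = c * shift_apply P a n"
proof -
  have "degree (smult c P) < Suc (degree P)" using degree_smult_le[of c P] by linarith
  then show ?thesis
    by (simp add: shift_apply_eq_sum_lessThan[of _ "Suc (degree P)"] sum_distrib_left mult_ac
             del: sum.lessThan_Suc)
qed

lemma shift_apply_sum:
  fixes f :: "'b \<Rightarrow> 'a::comm_ring_1 poly"
  shows "finite S \<Longrightarrow> shift_apply (\<Sum>x\<in>S. f x) a n = (\<Sum>x\<in>S. shift_apply (f x) a n)"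
  by (induction S rule: finite_induct) (auto simp: shift_apply_add)

lemma shift_apply_pCons_0:
  fixes P :: "'a::comm_ring_1 poly"
  shows "shift_apply (pCons 0 P) a n = shift_apply P a (Suc n)"
proof -
  have "degree (pCons 0 P) < Suc (Suc (degree P))" using degree_pCons_le[of 0 P] by linarith
  then have "shift_apply (pCons 0 P) a n = (\<Sum>i<Suc (Suc (degree P)). coeff (pCons 0 P) i * a (n + i))"
    by (rule shift_apply_eq_sum_lessThan)
  also have "\<dots> = (\<Sum>i<Suc (degree P). coeff P i * a (Suc n + i))"
    by (subst sum.lessThan_Suc_shift) simp
  also have "\<dots> = shift_apply P a (Suc n)"
    by (rule shift_apply_eq_sum_lessThan[symmetric]) simp
  finally show ?thesis .
qed

lemma shift_apply_monom:
  fixes c :: "'a::comm_ring_1"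
  shows "shift_apply (monom c N) a n = c * a (n + N)"
proof -
  have "degree (monom c N) < Suc N" using degree_monom_le[of c N] by linarith
  then have "shift_apply (monom c N) a n = (\<Sum>i<Suc N. coeff (monom c N) i * a (n + i))"
    by (rule shift_apply_eq_sum_lessThan)
  then show ?thesis
    by (simp add: if_distrib cong: if_cong)
qed

lemma annihilates_iff: "annihilates P a \<longleftrightarrow> (\<forall>n. shift_apply P a n = 0)"
  by (simp add: annihilates_def fun_eq_iff)

lemma annihilates_mult:
  fixes P Q :: "'a::comm_ring_1 poly"
  assumes "annihilates P a"
  shows "annihilates (Q * P) a"
  unfolding annihilates_iff
proof (induction Q)
  case (pCons c Q)
  then show ?case
    using assms by (simp add: annihilates_iff shift_apply_add shift_apply_smult shift_apply_pCons_0)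
qed simp

lemma annihilates_mod:
  fixes P Q :: "'a::field poly"
  assumes "annihilates P a" and "annihilates Q a"
  shows "annihilates (Q mod P) a"
proof -
  have "Q mod P = Q - (Q div P) * P" by (simp add: minus_div_mult_eq_mod)
  then show ?thesis
    using assms annihilates_mult[OF assms(1), of "Q div P"] by (simp add: annihilates_iff shift_apply_diff)
qed

subsection \<open>The minimal polynomial\<close>

lemma monic_poly_dvd_antisym:
  fixes P Q :: "'a::field poly"
  assumes "lead_coeff P = 1" and "lead_coeff Q = 1" and "P dvd Q" and "Q dvd P"
  shows "P = Q"
proof -
  obtain u where u: "Q = P * u" using \<open>P dvd Q\<close> by (elim dvdE)
  have "Q \<noteq> 0" "P \<noteq> 0" using assms(1,2) by auto
  then have "u \<noteq> 0" "degree Q \<le> degree P" using u \<open>Q dvd P\<close> by (auto simp: dvd_imp_degree_le)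
  then have "degree u = 0" using u \<open>P \<noteq> 0\<close> by (simp add: degree_mult_eq)
  moreover have "lead_coeff u = 1" using assms(1,2) u by (simp add: lead_coeff_mult)
  ultimately have "u = 1" by (metis degree_0_id one_pCons)
  then show ?thesis using u by simp
qed

lemma annihilator_has_monic_generator:
  fixes a :: "nat \<Rightarrow> 'a::field"
  assumes "is_recurrence a"
  shows "\<exists>P. lead_coeff P = 1 \<and> (\<forall>Q. annihilates Q a \<longleftrightarrow> P dvd Q)"
proof -
  from assms obtain Q0 where "Q0 \<noteq> 0 \<and> annihilates Q0 a"
    unfolding is_recurrence_def by blast
  then obtain P0 where P0: "P0 \<noteq> 0 \<and> annihilates P0 a"
    and least: "\<forall>Q. Q \<noteq> 0 \<and> annihilates Q a \<longrightarrow> degree P0 \<le> degree Q"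
    using ex_has_least_nat[of "\<lambda>Q. Q \<noteq> 0 \<and> annihilates Q a" Q0 degree] by blast
  define P where "P = smult (inverse (lead_coeff P0)) P0"
  have P: "lead_coeff P = 1" "annihilates P a" "degree P = degree P0" "P \<noteq> 0"
    using P0 by (auto simp: P_def annihilates_iff shift_apply_smult)
  have "annihilates Q a \<longleftrightarrow> P dvd Q" for Q
  proof
    assume "annihilates Q a"
    then have "annihilates (Q mod P) a" using annihilates_mod P(2) by blast
    moreover have "Q mod P = 0 \<or> degree (Q mod P) < degree P0"
      using degree_mod_less'[OF P(4)] P(3) by auto
    ultimately have "Q mod P = 0" using least by fastforce
    then show "P dvd Q" by (simp add: mod_eq_0_iff_dvd)
  next
    assume "P dvd Q"
    then obtain R where "Q = P * R" by (elim dvdE)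
    then show "annihilates Q a" using annihilates_mult[OF P(2), of R] by (simp add: mult.commute)
  qed
  then show ?thesis using P(1) by blast
qed

lemma annihilates_min_poly:
  fixes a :: "nat \<Rightarrow> 'a::field"
  assumes "is_recurrence a"
  shows "annihilates (min_poly a) a"
proof -
  obtain P where P: "lead_coeff P = 1" "\<forall>Q. annihilates Q a \<longleftrightarrow> P dvd Q"
    using annihilator_has_monic_generator[OF assms] by blast
  have "min_poly a = P"
    unfolding min_poly_def
  proof (rule the_equality)
    fix P' assume "lead_coeff P' = 1 \<and> (\<forall>Q. annihilates Q a \<longleftrightarrow> P' dvd Q)"
    then show "P' = P" using P by (metis monic_poly_dvd_antisym dvd_refl)
  qed (use P in simp)
  then show ?thesis using P by simp
qed

lemma annihilates_map_to_ac:
  assumes "annihilates P a"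
  shows "annihilates (map_poly to_ac P) (\<lambda>n. to_ac (a n))"
proof -
  have "shift_apply (map_poly to_ac P) (\<lambda>n. to_ac (a n)) n = to_ac (shift_apply P a n)" for n
    by (simp add: shift_apply_def coeff_map_poly degree_map_poly to_ac_sum)
  then show ?thesis using assms by (simp add: annihilates_iff)
qed

subsection \<open>Closed form of a simple recurrence\<close>

lemma rsquarefree_dvdI:
  fixes p q :: "'a::alg_closed_field poly"
  assumes "rsquarefree p" and "\<And>x. poly p x = 0 \<Longrightarrow> poly q x = 0"
  shows "p dvd q"
  using assms
proof (induction "degree p" arbitrary: p q rule: less_induct)
  case less
  have "p \<noteq> 0" using less.prems(1) by (simp add: rsquarefree_def)
  show ?case
  proof (cases "degree p = 0")
    case True
    then show ?thesis using \<open>p \<noteq> 0\<close> by (simp add: is_unit_iff_degree unit_imp_dvd)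
  next
    case False
    then obtain x where "poly p x = 0" using alg_closed_imp_poly_has_root by blast
    then obtain p' where p': "p = [:-x, 1:] * p'" by (metis dvdE poly_eq_0_iff_dvd)
    have "poly q x = 0" using less.prems(2) \<open>poly p x = 0\<close> .
    then obtain q' where q': "q = [:-x, 1:] * q'" by (metis dvdE poly_eq_0_iff_dvd)
    have "p' \<noteq> 0" using \<open>p \<noteq> 0\<close> p' by auto
    have order_p: "order y p = order y [:-x, 1:] + order y p'" for y
      using order_mult[of "[:-x, 1:]" p' y] \<open>p \<noteq> 0\<close> p' by simp
    have order_le_1: "order y p \<le> 1" for y
      using less.prems(1) by (auto simp: rsquarefree_def le_Suc_eq)
    have "order x [:-x, 1:] = 1" using order_power_n_n[of x 1] by simp
    then have "order x p' = 0" using order_le_1[of x] order_p[of x] by simp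
    then have "poly p' x \<noteq> 0" using \<open>p' \<noteq> 0\<close> order_root by blast
    have "order y p' \<le> 1" for y using order_le_1[of y] order_p[of y] by simp
    then have "rsquarefree p'"
      using \<open>p' \<noteq> 0\<close> by (auto simp: rsquarefree_def le_Suc_eq)
    moreover have "poly q' y = 0" if "poly p' y = 0" for y
      using less.prems(2)[of y] that \<open>poly p' x \<noteq> 0\<close> p' q' by auto
    moreover have "degree p = Suc (degree p')"
      unfolding p' using \<open>p' \<noteq> 0\<close> by (subst degree_mult_eq) auto
    ultimately have "p' dvd q'" by (intro less.hyps[of p']) auto
    then show ?thesis unfolding p' q' by (rule mult_dvd_mono[OF dvd_refl])
  qed
qed

definition lagrange_basis :: "'a::field set \<Rightarrow> 'a \<Rightarrow> 'a poly" where
  "lagrange_basis R \<alpha> = (\<Prod>\<beta>\<in>R - {\<alpha>}. smult (inverse (\<alpha> - \<beta>)) [:-\<beta>, 1:])"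

lemma poly_lagrange_basis:
  assumes "finite R" and "\<alpha> \<in> R" and "y \<in> R"
  shows "poly (lagrange_basis R \<alpha>) y = (if y = \<alpha> then 1 else 0)"
proof -
  have "poly (lagrange_basis R \<alpha>) y = (\<Prod>\<beta>\<in>R - {\<alpha>}. inverse (\<alpha> - \<beta>) * (y - \<beta>))"
    by (simp add: lagrange_basis_def poly_prod algebra_simps)
  also have "\<dots> = (if y = \<alpha> then 1 else 0)"
    using assms by (auto intro!: prod.neutral) (metis left_inverse right_minus_eq)
  finally show ?thesis .
qed

lemma rsquarefree_annihilates_closed_form:
  fixes A :: "nat \<Rightarrow> 'a::alg_closed_field"
  assumes ann: "annihilates P A" and sqf: "rsquarefree P"
  shows "\<exists>c. \<forall>n. A n = (\<Sum>\<alpha>\<in>{x. poly P x = 0}. c \<alpha> * \<alpha> ^ n)"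
proof -
  define R where "R = {x. poly P x = 0}"
  have "finite R"
    unfolding R_def using sqf poly_roots_finite by (auto simp: rsquarefree_def)
  define c where "c \<alpha> = shift_apply (lagrange_basis R \<alpha>) A 0" for \<alpha>
  have "A n = (\<Sum>\<alpha>\<in>R. c \<alpha> * \<alpha> ^ n)" for n
  proof -
    define I where "I = (\<Sum>\<alpha>\<in>R. smult (\<alpha> ^ n) (lagrange_basis R \<alpha>))"
    have "poly I y = y ^ n" if "y \<in> R" for y
    proof -
      have "poly I y = (\<Sum>\<alpha>\<in>R. if \<alpha> = y then y ^ n else 0)"
        unfolding I_def poly_sum using \<open>finite R\<close> that
        by (intro sum.cong refl) (simp add: poly_lagrange_basis)
      then show ?thesis using \<open>finite R\<close> that by simp
    qed
    then have "P dvd monom 1 n - I"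
      using sqf by (intro rsquarefree_dvdI) (simp_all add: R_def poly_monom)
    then obtain W where W: "monom 1 n - I = W * P" by (metis dvdE mult.commute)
    have "A n = shift_apply (monom 1 n) A 0"
      by (simp add: shift_apply_monom)
    also have "\<dots> = shift_apply I A 0 + shift_apply (W * P) A 0"
      by (simp flip: W add: shift_apply_diff)
    also have "shift_apply (W * P) A 0 = 0"
      using annihilates_mult[OF ann] by (simp add: annihilates_iff)
    also have "shift_apply I A 0 = (\<Sum>\<alpha>\<in>R. c \<alpha> * \<alpha> ^ n)"
      using \<open>finite R\<close> by (simp add: I_def shift_apply_sum shift_apply_smult c_def mult.commute)
    finally show ?thesis by simp
  qed
  then show ?thesis unfolding R_def by blast
qed

subsection \<open>Frobenius and repunit exponents\<close>

lemma sum_eq_0_if_repunit_power_sums_eq_0: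
  fixes h \<beta> :: "'b \<Rightarrow> 'c::alg_closed_field"
  assumes "CHAR('c) > 0" and "q = CHAR('c) ^ k" and "finite S"
    and "\<And>x. x \<in> S \<Longrightarrow> \<beta> x \<noteq> 0"
    and "\<And>i. i \<ge> 1 \<Longrightarrow> (\<Sum>x\<in>S. h x * \<beta> x ^ repunit q i) = 0"
  shows "(\<Sum>x\<in>S. h x) = 0"
  using assms(3-5)
proof (induction S arbitrary: h rule: finite_induct)
  case empty
  then show ?case by simp
next
  case (insert x S)
  have "prime CHAR('c)" using assms(1) by (rule prime_CHAR_semidom)
  then have "q > 0" using assms(2) by (simp add: prime_gt_0_nat)
  show ?case
  proof (cases "h x = 0")
    case True
    have "(\<Sum>y\<in>S. h y) = 0"
    proof (rule insert.IH)
      show "(\<Sum>y\<in>S. h y * \<beta> y ^ repunit q i) = 0" if "i \<ge> 1" for i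
        using insert.prems(2)[OF that] True insert.hyps by simp
    qed (use insert.prems(1) in blast)
    then show ?thesis using True insert.hyps by simp
  next
    case False
    have "\<forall>y. \<exists>z. z ^ q = h y * \<beta> y" using nth_root_exists[OF \<open>q > 0\<close>] by blast
    then obtain \<rho> where \<rho>: "\<And>y. \<rho> y ^ q = h y * \<beta> y" by metis
    have "\<rho> x \<noteq> 0"
      using \<rho>[of x] False insert.prems(1) \<open>q > 0\<close> by (metis insertI1 mult_eq_0_iff zero_power)
    (* g is a q-th root of h \<beta>, rescaled to agree with h at x; Frobenius and
       repunit q (i + 1) = 1 + q * repunit q i turn its i-th power sum into a q-th root
       of the (i + 1)-st power sum of h, so all power sums of g vanish, even for i = 0. *)
    define \<mu> where "\<mu> = h x / \<rho> x"
    define g where "g y = \<mu> * \<rho> y" for y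
    have "g x = h x" using \<open>\<rho> x \<noteq> 0\<close> by (simp add: g_def \<mu>_def)
    have g_sums: "(\<Sum>y\<in>insert x S. g y * \<beta> y ^ repunit q i) = 0" for i
    proof -
      have frobenius_term:
        "(g y * \<beta> y ^ repunit q i) ^ q = \<mu> ^ q * (h y * \<beta> y ^ repunit q (Suc i))" for y
      proof -
        have "(g y * \<beta> y ^ repunit q i) ^ q = \<mu> ^ q * \<rho> y ^ q * (\<beta> y ^ repunit q i) ^ q"
          by (simp add: g_def power_mult_distrib)
        also have "(\<beta> y ^ repunit q i) ^ q = \<beta> y ^ (q * repunit q i)"
          by (metis power_mult mult.commute)
        also have "\<mu> ^ q * \<rho> y ^ q * \<beta> y ^ (q * repunit q i)
            = \<mu> ^ q * (h y * \<beta> y ^ repunit q (Suc i))"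
          by (simp add: \<rho> repunit_Suc power_add mult_ac)
        finally show ?thesis .
      qed
      have "(\<Sum>y\<in>insert x S. g y * \<beta> y ^ repunit q i) ^ q
          = (\<Sum>y\<in>insert x S. (g y * \<beta> y ^ repunit q i) ^ q)"
        by (rule freshmans_dream_sum'[OF \<open>prime CHAR('c)\<close> assms(2)])
      also have "\<dots> = \<mu> ^ q * (\<Sum>y\<in>insert x S. h y * \<beta> y ^ repunit q (Suc i))"
        by (simp add: frobenius_term sum_distrib_left)
      also have "\<dots> = 0" using insert.prems(2)[of "Suc i"] by simp
      finally show ?thesis using \<open>q > 0\<close> by simp
    qed
    have "(\<Sum>y\<in>S. h y - g y) = 0"
    proof (rule insert.IH)
      show "(\<Sum>y\<in>S. (h y - g y) * \<beta> y ^ repunit q i) = 0" if "i \<ge> 1" for i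
        using insert.prems(2)[OF that] g_sums[of i] \<open>g x = h x\<close> insert.hyps
        by (simp add: left_diff_distrib sum_subtractf, metis add_left_cancel)
    qed (use insert.prems(1) in blast)
    then show ?thesis using g_sums[of 0] \<open>g x = h x\<close> insert.hyps by (simp add: sum_subtractf)
  qed
qed

lemma simple_recurrence_zero_if_zero_on_repunit_steps:
  fixes a :: "nat \<Rightarrow> 'k::field"
  assumes "CHAR('k) > 0" and "q = CHAR('k) ^ k"
    and "is_recurrence a" and "simple_rec a" and "poly (map_poly to_ac (min_poly a)) 0 \<noteq> 0"
    and "\<And>i. i \<ge> 1 \<Longrightarrow> a (M + T * repunit q i) = 0"
  shows "a M = 0"
proof -
  define P where "P = map_poly to_ac (min_poly a)"
  define R where "R = {x. poly P x = 0}"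
  have "rsquarefree P" using assms(4) by (simp add: simple_rec_def P_def)
  moreover have "annihilates P (\<lambda>n. to_ac (a n))"
    unfolding P_def by (intro annihilates_map_to_ac annihilates_min_poly assms(3))
  ultimately obtain c where c: "\<And>n. to_ac (a n) = (\<Sum>\<alpha>\<in>R. c \<alpha> * \<alpha> ^ n)"
    unfolding R_def using rsquarefree_annihilates_closed_form by blast
  have "(\<Sum>\<alpha>\<in>R. c \<alpha> * \<alpha> ^ M) = 0"
  proof (rule sum_eq_0_if_repunit_power_sums_eq_0[where \<beta> = "\<lambda>\<alpha>. \<alpha> ^ T"])
    show "CHAR('k alg_closure) > 0" "q = CHAR('k alg_closure) ^ k" using assms(1,2) by simp_all
    show "finite R"
      using \<open>rsquarefree P\<close> poly_roots_finite by (auto simp: R_def rsquarefree_def)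
    show "\<alpha> ^ T \<noteq> 0" if "\<alpha> \<in> R" for \<alpha>
      using assms(5) that by (auto simp: R_def P_def)
    show "(\<Sum>\<alpha>\<in>R. c \<alpha> * \<alpha> ^ M * (\<alpha> ^ T) ^ repunit q i) = 0" if "i \<ge> 1" for i
      using c[of "M + T * repunit q i"] assms(6)[OF that] by (simp add: power_add power_mult mult.assoc)
  qed
  then show ?thesis using c[of M] by simp
qed

lemma simple_recurrence_zeros_descend:
  fixes a :: "nat \<Rightarrow> 'k::field" and \<nu> :: "nat \<Rightarrow> nat"
  assumes "CHAR('k) > 0" and "q = CHAR('k) ^ k"
    and "is_recurrence a" and "simple_rec a" and "poly (map_poly to_ac (min_poly a)) 0 \<noteq> 0"
    and steps: "\<And>j. n0 \<le> j \<Longrightarrow> \<exists>T. \<forall>i. \<nu> (j + i) = \<nu> j + T * repunit q i"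
    and tail: "\<And>j. m \<le> j \<Longrightarrow> a (\<nu> j) = 0"
  shows "a (\<nu> n0) = 0"
proof -
  have "\<forall>j\<ge>n0. a (\<nu> j) = 0"
  proof (rule inc_induct[where P = "\<lambda>n. \<forall>j\<ge>n. a (\<nu> j) = 0"])
    show "n0 \<le> max n0 m" "\<forall>j\<ge>max n0 m. a (\<nu> j) = 0" using tail by simp_all
  next
    fix n assume "n0 \<le> n" and later: "\<forall>j\<ge>Suc n. a (\<nu> j) = 0"
    obtain T where T: "\<And>i. \<nu> (n + i) = \<nu> n + T * repunit q i" using steps[OF \<open>n0 \<le> n\<close>] by blast
    have "a (\<nu> n) = 0"
    proof (rule simple_recurrence_zero_if_zero_on_repunit_steps[OF assms(1-5)])
      show "a (\<nu> n + T * repunit q i) = 0" if "i \<ge> 1" for i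
        using later that by (simp flip: T)
    qed
    then show "\<forall>j\<ge>n. a (\<nu> j) = 0" using later by (metis Suc_le_eq le_eq_less_or_eq)
  qed
  then show ?thesis by simp
qed

subsection \<open>The progression r + s q^n\<close>

lemma geometric_progression_coeff_nonneg:
  fixes r s :: "'a::archimedean_field"
  assumes "2 \<le> q" and "\<And>n. m \<le> n \<Longrightarrow> 0 \<le> r + s * of_nat q ^ n"
  shows "0 \<le> s"
proof (rule ccontr)
  assume "\<not> 0 \<le> s"
  then obtain n :: nat where n: "r < of_nat n * (- s)" using ex_less_of_nat_mult[of "- s" r] by auto
  define j where "j = m + n"
  have "j < 2 ^ j" by (rule less_exp)
  also have "(2::nat) ^ j \<le> q ^ j" using assms(1) by (rule power_mono) simp
  finally have "of_nat n \<le> (of_nat q ^ j :: 'a)"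
    unfolding j_def by (metis add_leD2 less_imp_le of_nat_le_iff of_nat_power)
  then have "s * of_nat q ^ j \<le> s * of_nat n" using \<open>\<not> 0 \<le> s\<close> by (simp add: mult_left_mono_neg)
  then have "r + s * of_nat q ^ j < 0" using n by (simp add: algebra_simps)
  with assms(2)[of j] show False by (simp add: j_def)
qed

lemma geometric_progression_mono:
  fixes r s :: "'a::linordered_idom"
  assumes "1 \<le> q" and "0 \<le> s" and "i \<le> j"
  shows "r + s * of_nat q ^ i \<le> r + s * of_nat q ^ j"
  using assms by (simp add: mult_left_mono power_increasing)

lemma geometric_progression_Nats:
  fixes r s :: "'a::linordered_idom"
  assumes "1 \<le> q" and "0 \<le> s"
    and tail: "\<And>n. m \<le> n \<Longrightarrow> r + s * of_nat q ^ n \<in> \<nat>"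
    and start: "r + s * of_nat q ^ n0 \<in> \<nat>" and "n0 \<le> n"
  shows "r + s * of_nat q ^ n \<in> \<nat>"
proof -
  define N where "N j = r + s * of_nat q ^ j" for j
  have N_Suc: "N (Suc j) = of_nat q * N j - (of_nat q - 1) * r" for j
    by (simp add: N_def algebra_simps)
  have "(of_nat q - 1) * r = of_nat q * N m - N (Suc m)" by (simp add: N_Suc)
  also have "\<dots> \<in> \<int>"
    using tail[of m] tail[of "Suc m"] Nats_subset_Ints by (intro Ints_diff Ints_mult) (auto simp: N_def)
  finally have "(of_nat q - 1) * r \<in> \<int>" .
  have "N n \<in> \<int>" using \<open>n0 \<le> n\<close>
  proof (induction n rule: dec_induct)
    case base
    then show ?case using start Nats_subset_Ints by (auto simp: N_def)
  next
    case (step j)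
    then show ?case using \<open>(of_nat q - 1) * r \<in> \<int>\<close> by (simp add: N_Suc)
  qed
  have "0 \<le> N n0" using start by (auto simp: N_def elim!: Nats_cases)
  then have "0 \<le> N n"
    using geometric_progression_mono[OF assms(1,2) \<open>n0 \<le> n\<close>] by (simp add: N_def)
  with \<open>N n \<in> \<int>\<close> show ?thesis by (simp add: Nats_altdef2 N_def)
qed

lemma geometric_progression_repunit_steps:
  fixes r s :: "'a::linordered_idom" and \<nu> :: "nat \<Rightarrow> nat"
  assumes "1 \<le> q" and "0 \<le> s"
    and \<nu>: "\<And>j. n0 \<le> j \<Longrightarrow> r + s * of_nat q ^ j = of_nat (\<nu> j)" and "n0 \<le> j"
  shows "\<exists>T. \<forall>i. \<nu> (j + i) = \<nu> j + T * repunit q i"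
proof (intro exI allI)
  fix i
  have \<nu>_j: "of_nat (\<nu> j) = r + s * of_nat q ^ j"
    and \<nu>_Suc_j: "of_nat (\<nu> (Suc j)) = r + s * of_nat q ^ Suc j"
    and \<nu>_j_i: "of_nat (\<nu> (j + i)) = r + s * of_nat q ^ (j + i)"
    using \<nu>[of j] \<nu>[of "Suc j"] \<nu>[of "j + i"] \<open>n0 \<le> j\<close> by simp_all
  have "\<nu> j \<le> \<nu> (Suc j)"
    using geometric_progression_mono[OF assms(1,2), of j "Suc j" r]
    unfolding of_nat_le_iff[where 'a = 'a, symmetric] \<nu>_j \<nu>_Suc_j by simp
  have "(of_nat (\<nu> (j + i)) :: 'a)
      = (r + s * of_nat q ^ j) + s * of_nat q ^ j * (of_nat (repunit q i) * (of_nat q - 1))"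
    unfolding \<nu>_j_i of_nat_repunit_mult by (simp add: power_add algebra_simps)
  also have "\<dots> = of_nat (\<nu> j) + (of_nat (\<nu> (Suc j)) - of_nat (\<nu> j)) * of_nat (repunit q i)"
    unfolding \<nu>_j \<nu>_Suc_j by (simp add: algebra_simps)
  also have "\<dots> = of_nat (\<nu> j + (\<nu> (Suc j) - \<nu> j) * repunit q i)"
    using \<open>\<nu> j \<le> \<nu> (Suc j)\<close> by simp
  finally show "\<nu> (j + i) = \<nu> j + (\<nu> (Suc j) - \<nu> j) * repunit q i"
    by (simp only: of_nat_eq_iff)
qed

theorem lemma8p1:
  fixes a :: "nat \<Rightarrow> 'k::field" and q k m :: nat and r s :: rat
  assumes "CHAR('k) > 0"
    and "is_recurrence a" and "simple_rec a" and "nondegenerate_rec a"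
    and "k \<ge> 1" and "q = CHAR('k) ^ k"
    and "{r + s * of_nat q ^ n | n. n \<ge> m} \<subseteq> of_nat ` zero_set a"
  shows "{r + s * of_nat q ^ n | n. True} \<inter> \<nat> \<subseteq> of_nat ` zero_set a"
proof
  fix x assume "x \<in> {r + s * of_nat q ^ n | n. True} \<inter> \<nat>"
  then obtain n0 where x: "x = r + s * of_nat q ^ n0" "x \<in> \<nat>" by blast
  have tail: "r + s * of_nat q ^ n \<in> of_nat ` zero_set a" if "m \<le> n" for n
    using assms(7) that by blast
  have "prime CHAR('k)" using assms(1) by (rule prime_CHAR_semidom)
  then have "2 \<le> CHAR('k) ^ 1" by (simp add: prime_ge_2_nat)
  also have "\<dots> \<le> q" unfolding assms(6) using assms(1,5) by (intro power_increasing) simp_all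
  finally have "2 \<le> q" .
  have "0 \<le> s"
    using \<open>2 \<le> q\<close> by (rule geometric_progression_coeff_nonneg[where m = m and r = r])
      (use tail in fastforce)
  have "r + s * of_nat q ^ j \<in> \<nat>" if "n0 \<le> j" for j
  proof (rule geometric_progression_Nats[OF _ \<open>0 \<le> s\<close>])
    show "r + s * of_nat q ^ n \<in> \<nat>" if "m \<le> n" for n using tail[OF that] by auto
  qed (use \<open>2 \<le> q\<close> x that in auto)
  then have "\<forall>j. \<exists>z. n0 \<le> j \<longrightarrow> r + s * of_nat q ^ j = of_nat z"
    by (meson Nats_cases)
  then obtain \<nu> where \<nu>: "\<And>j. n0 \<le> j \<Longrightarrow> r + s * of_nat q ^ j = of_nat (\<nu> j)"
    by metis
  have "a (\<nu> n0) = 0"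
  proof (rule simple_recurrence_zeros_descend[OF assms(1,6,2,3), where \<nu> = \<nu> and m = "max m n0"])
    (* of nondegeneracy only the nonvanishing of the roots is needed *)
    show "poly (map_poly to_ac (min_poly a)) 0 \<noteq> 0"
      using assms(4) by (auto simp: nondegenerate_rec_def)
    show "\<exists>T. \<forall>i. \<nu> (j + i) = \<nu> j + T * repunit q i" if "n0 \<le> j" for j
      using geometric_progression_repunit_steps[OF _ \<open>0 \<le> s\<close> \<nu> that] \<open>2 \<le> q\<close> by simp
    show "a (\<nu> j) = 0" if j: "max m n0 \<le> j" for j
    proof -
      obtain z where "a z = 0" "r + s * of_nat q ^ j = of_nat z"
        using tail[of j] j by (auto simp: zero_set_def)
      then show ?thesis using \<nu>[of j] j by simp
    qed
  qed
  then show "x \<in> of_nat ` zero_set a" using x \<nu> by (auto simp: zero_set_def)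
qed

end
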